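(* For any constants $\beta_1, \beta_2 \in [0,1)$ with $\beta_1 < \sqrt{\beta_2}$, there exists a one-dimensional stochastic convex optimization problem — a compact convex set $\mathcal{F} \subset \mathbb{R}$ and a distribution over convex (linear) functions $f$ on $\mathcal{F}$ with bounded gradients, with expected objective $F(x) = \mathbb{E}[f(x)]$ having minimizer $x^*$ over $\mathcal{F}$ — such that, for every initial step size $\alpha > 0$, \textsc{Adam} run with parameters $\alpha, \beta_1, \beta_2$ on i.i.d. samples $f_1, f_2, \dots$ from this distribution does not converge to the optimal solution $x^*$.
   Context: \textsc{Adam} (without debiasing) on a closed convex set $\mathcal{F} \subset \mathbb{R}^d$ with loss functions $f_1, f_2, \dots$, initial point $x_1 \in \mathcal{F}$, initial step size $\alpha > 0$ and constants $\beta_1, \beta_2 \in [0,1)$ is defined as follows. Set $m_0 = v_0 = 0 \in \mathbb{R}^d$. For $t = 1, 2, \dots$: $g_t = \nabla f_t(x_t)$; $m_t = \beta_1 m_{t-1} + (1-\beta_1) g_t$; $v_t = \beta_2 v_{t-1} + (1-\beta_2) g_t^2$ (square taken coordinatewise); $V_t = \mathrm{diag}(v_t)$; $\alpha_t = \alpha/\sqrt{t}$; $\hat{x}_{t+1} = x_t - \alpha_t V_t^{-1/2} m_t$; $x_{t+1} = \Pi_{\mathcal{F}, \sqrt{V_t}}(\hat{x}_{t+1})$, where for a positive definite matrix $M$, $\Pi_{\mathcal{F}, M}(y) = \arg\min_{x \in \mathcal{F}} \|M^{1/2}(x-y)\|$. *)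

theory Defs
  imports "HOL-Probability.Probability"
begin

text \<open>Weighted projection onto a set F of the real line with respect to a (1x1) positive
  definite matrix M:  Pi_{F,M}(y) = argmin over x in F of |M^(1/2) (x - y)|.\<close>
definition wproj :: "real set \<Rightarrow> real \<Rightarrow> real \<Rightarrow> real" where
  "wproj F M y = (SOME x. x \<in> F \<and> (\<forall>z\<in>F. \<bar>sqrt M * (x - y)\<bar> \<le> \<bar>sqrt M * (z - y)\<bar>))"

text \<open>One-dimensional Adam without debiasing.  f t is the loss function at step t (t \<ge> 1).
  adam F x1 \<alpha> b1 b2 f n = (x_{n+1}, m_n, v_n); in particular adam ... 0 = (x_1, 0, 0).\<close>
primrec adam :: "real set \<Rightarrow> real \<Rightarrow> real \<Rightarrow> real \<Rightarrow> real \<Rightarrow> (nat \<Rightarrow> real \<Rightarrow> real)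
                   \<Rightarrow> nat \<Rightarrow> real \<times> real \<times> real" where
  "adam F x1 \<alpha> b1 b2 f 0 = (x1, 0, 0)"
| "adam F x1 \<alpha> b1 b2 f (Suc n) =
     (let (x, m, v) = adam F x1 \<alpha> b1 b2 f n;
          t = Suc n;
          g = deriv (f t) x;
          m' = b1 * m + (1 - b1) * g;
          v' = b2 * v + (1 - b2) * g\<^sup>2;
          \<alpha>t = \<alpha> / sqrt (real t);
          xh = x - \<alpha>t * m' / sqrt v'
      in (wproj F (sqrt v') xh, m', v'))"

definition adam_iter :: "real set \<Rightarrow> real \<Rightarrow> real \<Rightarrow> real \<Rightarrow> real \<Rightarrow> (nat \<Rightarrow> real \<Rightarrow> real)
                   \<Rightarrow> nat \<Rightarrow> real" where
  "adam_iter F x1 \<alpha> b1 b2 f t = fst (adam F x1 \<alpha> b1 b2 f (t - 1))"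

end

theory Submission
  imports Defs
begin

text \<open>Take F = [0,1] and the linear losses c x, where c = C with a small probability p and
  c = -1 otherwise, with p C = 2, so that the expected loss (1 + p) x is minimised at 0.
  Adam's direction m_t / sqrt v_t is bounded by a constant K in general, and after L consecutive
  gradients -1 it is at most -1/3, because b1 < sqrt b2 makes the second moment remember a large
  gradient longer than the first. A large gradient occurs among the last L with probability at
  most L p. If the iterates converged to 0, the clamped steps of size \<alpha>/sqrt t would keep the
  sums of (1/3 - K [recent large gradient]) / sqrt t bounded above; by Markov's inequality this
  has probability at most 1/2 once 4 K L p \<le> 1/3.\<close>

primrec ema :: "real \<Rightarrow> (nat \<Rightarrow> real) \<Rightarrow> nat \<Rightarrow> real" where
  "ema b g 0 = 0"
| "ema b g (Suc n) = b * ema b g n + (1 - b) * g n"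

lemma ema_nonneg:
  assumes "0 \<le> b" "b \<le> 1" "\<And>i. 0 \<le> g i"
  shows "0 \<le> ema b g n"
  by (induction n) (use assms in simp_all)

lemma ema_convex_combination_abs_le:
  assumes "0 \<le> b" "b \<le> 1"
  shows "\<bar>ema b g (Suc n)\<bar> \<le> b * \<bar>ema b g n\<bar> + (1 - b) * \<bar>g n\<bar>"
  using abs_triangle_ineq[of "b * ema b g n" "(1 - b) * g n"] assms by (simp add: abs_mult)

lemma ema_abs_le:
  assumes "0 \<le> b" "b \<le> 1" "\<And>i. \<bar>g i\<bar> \<le> C"
  shows "\<bar>ema b g n\<bar> \<le> C"
proof (induction n)
  case 0
  show ?case using assms(3)[of 0] by simp
next
  case (Suc n)
  have "\<bar>ema b g (Suc n)\<bar> \<le> b * \<bar>ema b g n\<bar> + (1 - b) * \<bar>g n\<bar>"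
    using assms(1,2) by (rule ema_convex_combination_abs_le)
  also have "\<dots> \<le> b * C + (1 - b) * C"
    using Suc assms by (intro add_mono mult_left_mono) auto
  finally show ?case by (simp add: algebra_simps)
qed

lemma ema_constant_run:
  assumes "\<And>j. j < k \<Longrightarrow> g (n + j) = c"
  shows "ema b g (n + k) = b ^ k * ema b g n + (1 - b ^ k) * c"
  using assms
proof (induction k)
  case 0
  show ?case by simp
next
  case (Suc k)
  then have IH: "ema b g (n + k) = b ^ k * ema b g n + (1 - b ^ k) * c"
    and run: "g (n + k) = c" by auto
  show ?case
    by (simp only: add_Suc_right ema.simps IH run power_Suc) (simp add: algebra_simps)
qed

definition adam_ratio_bound :: "real \<Rightarrow> real \<Rightarrow> real" where
  "adam_ratio_bound b1 b2 = (1 - b1) / (sqrt (1 - b2) * (1 - b1 / sqrt b2))"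

lemma adam_ratio_bound_nonneg:
  assumes "b1 < 1" "0 < b2" "b2 < 1" "b1 < sqrt b2"
  shows "0 \<le> adam_ratio_bound b1 b2"
proof -
  have "b1 / sqrt b2 < 1" using assms by (simp add: divide_less_eq)
  then show ?thesis using assms by (simp add: adam_ratio_bound_def)
qed

text \<open>The first moment decays by the factor b1 and the square root of the second only by
  sqrt b2 > b1, so the bound K = adam_ratio_bound b1 b2 is preserved: K = (b1 / sqrt b2) K +
  (1 - b1) / sqrt (1 - b2).\<close>
lemma ema_abs_le_sqrt_ema_square:
  assumes b1: "0 \<le> b1" "b1 < 1" and b2: "0 < b2" "b2 < 1" and b12: "b1 < sqrt b2"
  shows "\<bar>ema b1 g n\<bar> \<le> adam_ratio_bound b1 b2 * sqrt (ema b2 (\<lambda>i. (g i)\<^sup>2) n)"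
proof (induction n)
  case 0
  show ?case by simp
next
  case (Suc n)
  define K where "K = adam_ratio_bound b1 b2"
  define \<rho> where "\<rho> = b1 / sqrt b2"
  define c where "c = (1 - b1) / sqrt (1 - b2)"
  define v where "v = ema b2 (\<lambda>i. (g i)\<^sup>2) n"
  define V where "V = ema b2 (\<lambda>i. (g i)\<^sup>2) (Suc n)"
  have \<rho>: "0 \<le> \<rho>" "\<rho> < 1" using assms by (auto simp: \<rho>_def divide_less_eq)
  have "K = c / (1 - \<rho>)" by (simp add: K_def adam_ratio_bound_def \<rho>_def c_def)
  then have K: "0 \<le> K" "\<rho> * K + c = K"
    using adam_ratio_bound_nonneg[of b1 b2] assms \<rho> by (auto simp: K_def field_simps)
  have V: "V = b2 * v + (1 - b2) * (g n)\<^sup>2" by (simp add: V_def v_def)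
  have v: "0 \<le> v" unfolding v_def using b2 by (intro ema_nonneg) auto
  have "sqrt (b2 * v) \<le> sqrt V" using V b2 by simp
  then have V1: "sqrt b2 * sqrt v \<le> sqrt V" by (simp add: real_sqrt_mult)
  have "sqrt ((1 - b2) * (g n)\<^sup>2) \<le> sqrt V" using V b2 v by simp
  then have V2: "sqrt (1 - b2) * \<bar>g n\<bar> \<le> sqrt V" by (simp add: real_sqrt_mult)
  have "\<bar>ema b1 g (Suc n)\<bar> \<le> b1 * \<bar>ema b1 g n\<bar> + (1 - b1) * \<bar>g n\<bar>"
    using b1 by (intro ema_convex_combination_abs_le) auto
  also have "\<dots> \<le> b1 * (K * sqrt v) + (1 - b1) * \<bar>g n\<bar>"
    using Suc b1 by (intro add_mono mult_left_mono) (auto simp: K_def v_def)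
  also have "\<dots> = \<rho> * K * (sqrt b2 * sqrt v) + c * (sqrt (1 - b2) * \<bar>g n\<bar>)"
    using b2 by (simp add: \<rho>_def c_def)
  also have "\<dots> \<le> \<rho> * K * sqrt V + c * sqrt V"
    using V1 V2 \<rho> K b1 b2 by (intro add_mono mult_left_mono) (auto simp: c_def)
  also have "\<dots> = (\<rho> * K + c) * sqrt V" by (simp add: distrib_right)
  also have "\<dots> = K * sqrt V" using K by simp
  finally show ?case by (simp add: K_def V_def)
qed

lemma wproj_atLeastAtMost:
  assumes "0 < M" "a \<le> b"
  shows "wproj {a..b} M y = max a (min b y)"
proof -
  define z where "z = max a (min b y)"
  have closest: "\<bar>z - y\<bar> \<le> \<bar>w - y\<bar>" if "w \<in> {a..b}" for w
    using that by (auto simp: z_def)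
  have unique: "w = z" if "w \<in> {a..b}" "\<bar>w - y\<bar> \<le> \<bar>z - y\<bar>" for w
    using that by (auto simp: z_def split: if_splits)
  let ?P = "\<lambda>x. x \<in> {a..b} \<and> (\<forall>w\<in>{a..b}. \<bar>sqrt M * (x - y)\<bar> \<le> \<bar>sqrt M * (w - y)\<bar>)"
  have "?P z"
    using closest assms by (auto simp: z_def abs_mult intro: mult_left_mono)
  then have "?P (wproj {a..b} M y)" unfolding wproj_def by (rule someI)
  then have "wproj {a..b} M y \<in> {a..b}" "\<bar>wproj {a..b} M y - y\<bar> \<le> \<bar>z - y\<bar>"
    using \<open>?P z\<close> assms by (auto simp: abs_mult)
  then show ?thesis unfolding z_def[symmetric] by (rule unique)
qed

lemma ema_Suc_pos:
  assumes "0 \<le> b" "b < 1" "\<And>i. 0 \<le> g i" "0 < g n"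
  shows "0 < ema b g (Suc n)"
proof -
  have "0 \<le> ema b g n" using assms by (intro ema_nonneg) auto
  then show ?thesis using assms by (simp add: add_nonneg_pos)
qed

definition adam_direction :: "real \<Rightarrow> real \<Rightarrow> (nat \<Rightarrow> real) \<Rightarrow> nat \<Rightarrow> real" where
  "adam_direction b1 b2 g t = ema b1 g t / sqrt (ema b2 (\<lambda>i. (g i)\<^sup>2) t)"

lemma adam_linear_moments:
  "snd (adam F x1 \<alpha> b1 b2 (\<lambda>t x. g (t - 1) * x) n) = (ema b1 g n, ema b2 (\<lambda>i. (g i)\<^sup>2) n)"
proof (induction n)
  case 0
  show ?case by simp
next
  case (Suc n)
  obtain x m v where "adam F x1 \<alpha> b1 b2 (\<lambda>t x. g (t - 1) * x) n = (x, m, v)"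
    by (metis prod_cases3)
  with Suc show ?case by (simp add: Let_def)
qed

lemma adam_linear_Suc:
  "fst (adam F x1 \<alpha> b1 b2 (\<lambda>t x. g (t - 1) * x) (Suc n)) =
     wproj F (sqrt (ema b2 (\<lambda>i. (g i)\<^sup>2) (Suc n)))
       (fst (adam F x1 \<alpha> b1 b2 (\<lambda>t x. g (t - 1) * x) n)
          - \<alpha> / sqrt (real (Suc n)) * adam_direction b1 b2 g (Suc n))"
proof -
  obtain x m v where run: "adam F x1 \<alpha> b1 b2 (\<lambda>t x. g (t - 1) * x) n = (x, m, v)"
    by (metis prod_cases3)
  then have "m = ema b1 g n" "v = ema b2 (\<lambda>i. (g i)\<^sup>2) n"
    using adam_linear_moments[of F x1 \<alpha> b1 b2 g n] by simp_all
  with run show ?thesis by (simp add: Let_def adam_direction_def)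
qed

lemma adam_linear_interval_Suc:
  assumes "a \<le> b" "0 \<le> b2" "b2 < 1" "g n \<noteq> 0"
  shows "fst (adam {a..b} x1 \<alpha> b1 b2 (\<lambda>t x. g (t - 1) * x) (Suc n)) =
     max a (min b (fst (adam {a..b} x1 \<alpha> b1 b2 (\<lambda>t x. g (t - 1) * x) n)
          - \<alpha> / sqrt (real (Suc n)) * adam_direction b1 b2 g (Suc n)))"
proof -
  have "0 < ema b2 (\<lambda>i. (g i)\<^sup>2) (Suc n)" using assms by (intro ema_Suc_pos) auto
  then show ?thesis
    unfolding adam_linear_Suc by (intro wproj_atLeastAtMost assms(1)) simp
qed

lemma adam_direction_abs_le:
  assumes "0 \<le> b1" "b1 < 1" "0 < b2" "b2 < 1" "b1 < sqrt b2"
  shows "\<bar>adam_direction b1 b2 g t\<bar> \<le> adam_ratio_bound b1 b2"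
proof (cases "ema b2 (\<lambda>i. (g i)\<^sup>2) t = 0")
  case True
  then show ?thesis using adam_ratio_bound_nonneg assms by (simp add: adam_direction_def)
next
  case False
  have "0 \<le> ema b2 (\<lambda>i. (g i)\<^sup>2) t" using assms by (intro ema_nonneg) auto
  with False have "0 < sqrt (ema b2 (\<lambda>i. (g i)\<^sup>2) t)" by simp
  then show ?thesis using ema_abs_le_sqrt_ema_square[OF assms, of g t]
    by (simp add: adam_direction_def abs_div pos_divide_le_eq)
qed

text \<open>The history before the run enters only with the weights b1^L and b2^L.\<close>
lemma adam_direction_after_negative_run:
  assumes b1: "0 \<le> b1" "b1 < 1" and b2: "0 \<le> b2" "b2 < 1"
    and bound: "\<And>i. \<bar>g i\<bar> \<le> C"
    and run: "\<And>j. j < L \<Longrightarrow> g (n + j) = -1"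
    and h1: "b1 ^ L * C \<le> 1/4" and h2: "b1 ^ L \<le> 1/4" and h3: "b2 ^ L * C\<^sup>2 \<le> 1"
  shows "adam_direction b1 b2 g (n + L) \<le> -1/3"
proof -
  define m where "m = ema b1 g (n + L)"
  define v where "v = ema b2 (\<lambda>i. (g i)\<^sup>2) (n + L)"
  have L: "L \<noteq> 0" using h2 by (cases L) auto
  have m_eq: "m = b1 ^ L * ema b1 g n - (1 - b1 ^ L)"
    unfolding m_def using run by (subst ema_constant_run[where c = "-1"]) auto
  have v_eq: "v = b2 ^ L * ema b2 (\<lambda>i. (g i)\<^sup>2) n + (1 - b2 ^ L)"
    unfolding v_def using run by (subst ema_constant_run[where c = 1]) auto
  have "b1 ^ L * ema b1 g n \<le> b1 ^ L * C"
    using ema_abs_le[of b1 g C n] bound b1 by (intro mult_left_mono) auto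
  then have m_le: "m \<le> -1/2" using m_eq h1 h2 by linarith
  have "\<bar>(g i)\<^sup>2\<bar> \<le> C\<^sup>2" for i
  proof -
    have "\<bar>g i\<bar>\<^sup>2 \<le> C\<^sup>2" using bound[of i] by (intro power_mono) auto
    then show ?thesis by simp
  qed
  then have "ema b2 (\<lambda>i. (g i)\<^sup>2) n \<le> C\<^sup>2"
    using ema_abs_le[of b2 "\<lambda>i. (g i)\<^sup>2" "C\<^sup>2" n] b2 by auto
  then have "b2 ^ L * ema b2 (\<lambda>i. (g i)\<^sup>2) n \<le> b2 ^ L * C\<^sup>2"
    using b2 by (intro mult_left_mono) auto
  then have "v \<le> 2" using v_eq h3 b2 by (smt (verit) zero_le_power)
  then have "sqrt v \<le> sqrt 2" by simp
  also have "sqrt 2 \<le> 3/2" by (rule real_le_lsqrt) (auto simp: power2_eq_square)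
  finally have "sqrt v \<le> 3/2" .
  moreover have "0 < v"
  proof -
    have "0 \<le> ema b2 (\<lambda>i. (g i)\<^sup>2) n" using b2 by (intro ema_nonneg) auto
    moreover have "b2 ^ L < 1" using b2 L by (simp add: power_less_one_iff)
    ultimately show ?thesis using v_eq b2 by (simp add: add_nonneg_pos)
  qed
  ultimately have "m \<le> -1/3 * sqrt v" using m_le by linarith
  with \<open>0 < v\<close> show ?thesis by (simp add: adam_direction_def m_def v_def pos_divide_le_eq)
qed

lemma clamped_descent_bdd_above:
  fixes X d :: "nat \<Rightarrow> real"
  assumes range: "\<And>n. X n \<in> {a..b}"
    and step: "\<And>n. min b (X n - d n) \<le> X (Suc n)"
    and below: "\<forall>\<^sub>F n in sequentially. X n < b"
  shows "bdd_above (range (\<lambda>n. \<Sum>k<n. - d k))"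
proof -
  obtain N where N: "\<And>n. N \<le> n \<Longrightarrow> X n < b"
    using below by (auto simp: eventually_sequentially)
  have descent: "X N - (\<Sum>k\<in>{N..<n}. d k) \<le> X n" if "N \<le> n" for n
    using that
  proof (induction n rule: dec_induct)
    case base
    show ?case by simp
  next
    case (step n)
    then have "X n - d n \<le> X (Suc n)"
      using assms(2)[of n] N[of "Suc n"] by (auto simp: min_def split: if_splits)
    with step show ?case by simp
  qed
  have "(\<Sum>k<n. - d k) \<le> (\<Sum>k<N. \<bar>d k\<bar>) + (b - a)" for n
  proof (cases "N \<le> n")
    case True
    have "(\<Sum>k<n. - d k) = (\<Sum>k<N. - d k) + (\<Sum>k\<in>{N..<n}. - d k)"
      using True by (metis atLeast0LessThan sum.atLeastLessThan_concat zero_le)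
    also have "\<dots> \<le> (\<Sum>k<N. \<bar>d k\<bar>) + (b - a)"
      using descent[OF True] range[of n] range[of N]
      by (intro add_mono sum_mono) (auto simp: sum_negf)
    finally show ?thesis .
  next
    case False
    have "(\<Sum>k<n. - d k) \<le> (\<Sum>k<N. \<bar>d k\<bar>)"
      using False by (intro order_trans[OF sum_mono sum_mono2]) auto
    then show ?thesis using range[of 0] by simp
  qed
  then show ?thesis by (intro bdd_aboveI2) blast
qed

text \<open>The first L steps, whose window of length L is not yet full, count as hits.\<close>
definition hit_recently :: "nat \<Rightarrow> real \<Rightarrow> (nat \<Rightarrow> real) \<Rightarrow> nat \<Rightarrow> bool" where
  "hit_recently L C g t \<longleftrightarrow> t < L \<or> C \<in> g ` {t - L..<t}"

lemma adam_direction_not_hit_recently: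
  assumes "0 \<le> b1" "b1 < 1" "0 \<le> b2" "b2 < 1" "1 \<le> C"
    and vals: "\<And>i. g i \<in> {C, -1}"
    and "b1 ^ L * C \<le> 1/4" "b1 ^ L \<le> 1/4" "b2 ^ L * C\<^sup>2 \<le> 1"
    and not_hit: "\<not> hit_recently L C g t"
  shows "adam_direction b1 b2 g t \<le> -1/3"
proof -
  have L: "L \<le> t" using not_hit by (simp add: hit_recently_def)
  have "g (t - L + j) = -1" if "j < L" for j
  proof -
    have "t - L + j \<in> {t - L..<t}" using that L by auto
    then have "g (t - L + j) \<noteq> C" using not_hit unfolding hit_recently_def by blast
    then show ?thesis using vals[of "t - L + j"] by blast
  qed
  moreover have "\<bar>g i\<bar> \<le> C" for i using vals[of i] \<open>1 \<le> C\<close> by auto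
  ultimately have "adam_direction b1 b2 g (t - L + L) \<le> -1/3"
    using assms by (intro adam_direction_after_negative_run) auto
  with L show ?thesis by simp
qed

lemma adam_direction_le_hit_penalty:
  assumes b1: "0 \<le> b1" "b1 < 1" and b2: "0 < b2" "b2 < 1" and b12: "b1 < sqrt b2"
    and C: "1 \<le> C" and vals: "\<And>i. g i \<in> {C, -1}"
    and h: "b1 ^ L * C \<le> 1/4" "b1 ^ L \<le> 1/4" "b2 ^ L * C\<^sup>2 \<le> 1"
  shows "1/3 - (adam_ratio_bound b1 b2 + 1/3) * of_bool (hit_recently L C g t)
           \<le> - adam_direction b1 b2 g t"
proof (cases "hit_recently L C g t")
  case True
  then show ?thesis using adam_direction_abs_le[OF b1 b2 b12] by (simp add: abs_le_iff)
next
  case False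
  have "adam_direction b1 b2 g t \<le> -1/3"
    using b1 b2 by (intro adam_direction_not_hit_recently[OF _ _ _ _ C vals h False]) auto
  with False show ?thesis by simp
qed

text \<open>Near 0 the projection never clips at 1, so every step raises the iterate by
  \<alpha>/sqrt t times minus the direction, which is at least 1/3 without a recent large gradient
  and at least -adam_ratio_bound otherwise; the iterate itself stays in [0,1].\<close>
lemma adam_convergent_imp_bdd_above:
  assumes b1: "0 \<le> b1" "b1 < 1" and b2: "0 < b2" "b2 < 1" and b12: "b1 < sqrt b2"
    and C: "1 \<le> C" and vals: "\<And>i. g i \<in> {C, -1}"
    and h: "b1 ^ L * C \<le> 1/4" "b1 ^ L \<le> 1/4" "b2 ^ L * C\<^sup>2 \<le> 1"
    and \<alpha>: "0 < \<alpha>" and x1: "x1 \<in> {0..1}"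
    and conv: "(\<lambda>t. adam_iter {0..1} x1 \<alpha> b1 b2 (\<lambda>t x. g (t - 1) * x) (Suc t)) \<longlonglongrightarrow> 0"
  defines "K \<equiv> adam_ratio_bound b1 b2 + 1/3"
  shows "bdd_above (range (\<lambda>n. \<Sum>k<n.
           (1/3 - K * of_bool (hit_recently L C g (Suc k))) * (1 / sqrt (real (Suc k)))))"
proof -
  define X where "X n = fst (adam {0..1} x1 \<alpha> b1 b2 (\<lambda>t x. g (t - 1) * x) n)" for n
  define d where "d n = \<alpha> / sqrt (real (Suc n)) * adam_direction b1 b2 g (Suc n)" for n
  have "g n \<noteq> 0" for n using vals[of n] C by auto
  then have X_Suc: "X (Suc n) = max 0 (min 1 (X n - d n))" for n
    unfolding X_def d_def using b2 by (intro adam_linear_interval_Suc) auto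
  have "X n \<in> {0..1}" for n
  proof (cases n)
    case 0
    then show ?thesis using x1 by (simp add: X_def)
  next
    case (Suc m)
    then show ?thesis using X_Suc[of m] by simp
  qed
  moreover have "min 1 (X n - d n) \<le> X (Suc n)" for n using X_Suc by simp
  moreover have "X \<longlonglongrightarrow> 0" using conv by (simp add: X_def[abs_def] adam_iter_def)
  then have "\<forall>\<^sub>F n in sequentially. X n < 1" by (rule order_tendstoD(2)) simp
  ultimately obtain B where B: "\<And>n. (\<Sum>k<n. - d k) \<le> B"
    using clamped_descent_bdd_above[of X 0 1 d] by (auto simp: bdd_above_def)
  have term_le: "(1/3 - K * of_bool (hit_recently L C g (Suc k))) * (1 / sqrt (real (Suc k)))
      \<le> - d k / \<alpha>" for k
  proof -
    have "1/3 - K * of_bool (hit_recently L C g (Suc k)) \<le> - adam_direction b1 b2 g (Suc k)"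
      unfolding K_def by (rule adam_direction_le_hit_penalty[OF b1 b2 b12 C vals h])
    then have "(1/3 - K * of_bool (hit_recently L C g (Suc k))) * (1 / sqrt (real (Suc k)))
        \<le> - adam_direction b1 b2 g (Suc k) * (1 / sqrt (real (Suc k)))"
      by (rule mult_right_mono) simp
    also have "\<dots> = - d k / \<alpha>" using \<alpha> by (simp add: d_def)
    finally show ?thesis .
  qed
  have "(\<Sum>k<n. (1/3 - K * of_bool (hit_recently L C g (Suc k))) * (1 / sqrt (real (Suc k))))
      \<le> B / \<alpha>" for n
  proof -
    have "(\<Sum>k<n. (1/3 - K * of_bool (hit_recently L C g (Suc k))) * (1 / sqrt (real (Suc k))))
        \<le> (\<Sum>k<n. - d k / \<alpha>)" by (intro sum_mono term_le)
    also have "\<dots> = (\<Sum>k<n. - d k) / \<alpha>" by (simp add: sum_divide_distrib)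
    also have "\<dots> \<le> B / \<alpha>" using B \<alpha> by (intro divide_right_mono) auto
    finally show ?thesis .
  qed
  then show ?thesis by (intro bdd_aboveI2)
qed

lemma (in prob_space) expectation_weighted_indicator_sum_le:
  fixes A :: "nat \<Rightarrow> 'a set" and w :: "nat \<Rightarrow> real"
  assumes A: "\<And>k. A k \<in> events" and small: "\<And>k. L \<le> k \<Longrightarrow> prob (A k) \<le> q"
    and w: "\<And>k. 0 \<le> w k"
  shows "(\<integral>x. (\<Sum>k<n. indicator (A k) x * w k) \<partial>M) \<le> (\<Sum>k<L. w k) + q * (\<Sum>k<n. w k)"
proof -
  have q: "0 \<le> q" using small[of L] measure_nonneg[of M "A L"] by linarith
  have "(\<integral>x. (\<Sum>k<n. indicator (A k) x * w k) \<partial>M) = (\<Sum>k<n. prob (A k) * w k)"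
    using A by (subst Bochner_Integration.integral_sum) (auto simp: emeasure_eq_measure)
  also have "\<dots> \<le> (\<Sum>k<n. (if k \<in> {..<L} then w k else 0) + q * w k)"
  proof (intro sum_mono)
    fix k
    show "prob (A k) * w k \<le> (if k \<in> {..<L} then w k else 0) + q * w k"
    proof (cases "k < L")
      case True
      have "prob (A k) * w k \<le> 1 * w k" using w by (intro mult_right_mono) auto
      then show ?thesis using True mult_nonneg_nonneg[OF q w[of k]] by simp
    next
      case False
      then show ?thesis using small[of k] w[of k] by (simp add: mult_right_mono)
    qed
  qed
  also have "\<dots> = (\<Sum>k\<in>{..<n} \<inter> {..<L}. w k) + q * (\<Sum>k<n. w k)"
    by (simp add: sum.distrib sum.inter_restrict sum_distrib_left)
  also have "\<dots> \<le> (\<Sum>k<L. w k) + q * (\<Sum>k<n. w k)"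
    using w by (intro add_mono sum_mono2) auto
  finally show ?thesis .
qed

lemma (in prob_space) prob_weighted_indicator_sum_ge_le:
  fixes A :: "nat \<Rightarrow> 'a set" and w :: "nat \<Rightarrow> real"
  assumes A[measurable]: "\<And>k. A k \<in> events" and small: "\<And>k. L \<le> k \<Longrightarrow> prob (A k) \<le> q"
    and w: "\<And>k. 0 \<le> w k" and a: "0 < a"
  shows "prob {x\<in>space M. a \<le> (\<Sum>k<n. indicator (A k) x * w k)}
           \<le> ((\<Sum>k<L. w k) + q * (\<Sum>k<n. w k)) / a"
proof -
  have "integrable M (\<lambda>x. \<Sum>k<n. indicator (A k) x * w k)"
    by (rule Bochner_Integration.integrable_sum) (auto simp: emeasure_eq_measure)
  then have "prob {x\<in>space M. a \<le> (\<Sum>k<n. indicator (A k) x * w k)}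
      \<le> (\<integral>x. (\<Sum>k<n. indicator (A k) x * w k) \<partial>M) / a"
    using a w by (intro integral_Markov_inequality_measure[where A = "space M"])
      (auto intro!: sum_nonneg)
  also have "\<dots> \<le> ((\<Sum>k<L. w k) + q * (\<Sum>k<n. w k)) / a"
    using expectation_weighted_indicator_sum_le[of A L q w n] A small w a
    by (intro divide_right_mono) auto
  finally show ?thesis .
qed

text \<open>Markov's inequality: the expected weighted count of the events A k grows only like q
  times the total weight, so with 4 K q \<le> c the sums eventually exceed B with probability at
  least 1/2.\<close>
lemma (in prob_space) prob_weighted_sums_bounded_le_half:
  fixes A :: "nat \<Rightarrow> 'a set" and w :: "nat \<Rightarrow> real"
  assumes A[measurable]: "\<And>k. A k \<in> events" and small: "\<And>k. L \<le> k \<Longrightarrow> prob (A k) \<le> q"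
    and w: "\<And>k. 0 \<le> w k" and diverges: "filterlim (\<lambda>n. \<Sum>k<n. w k) at_top sequentially"
    and c: "0 < c" and K: "0 < K" and Kq: "4 * K * q \<le> c"
  shows "prob {x\<in>space M. \<forall>n. (\<Sum>k<n. (c - K * indicator (A k) x) * w k) \<le> B} \<le> 1/2"
proof -
  define H where "H n = (\<Sum>k<n. w k)" for n
  define Q where "Q n x = (\<Sum>k<n. indicator (A k) x * w k)" for n x
  have [measurable]: "Q n \<in> borel_measurable M" for n unfolding Q_def by measurable
  define W0 where "W0 = (\<Sum>k<L. w k)"
  have W0: "0 \<le> W0" using w by (simp add: W0_def sum_nonneg)
  have sum_eq: "(\<Sum>k<n. (c - K * indicator (A k) x) * w k) = c * H n - K * Q n x" for n x
  proof -
    have "(\<Sum>k<n. (c - K * indicator (A k) x) * w k)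
        = (\<Sum>k<n. c * w k - K * (indicator (A k) x * w k))"
      by (intro sum.cong) (auto simp: algebra_simps)
    then show ?thesis by (simp only: sum_subtractf sum_distrib_left H_def Q_def)
  qed
  obtain n where n: "(4 * K * W0 + 2 * \<bar>B\<bar> + 1) / c \<le> H n"
    using diverges unfolding filterlim_at_top H_def eventually_sequentially by blast
  then have cH: "4 * K * W0 + 2 * \<bar>B\<bar> + 1 \<le> c * H n" using c by (simp add: field_simps)
  define a where "a = (c * H n - B) / K"
  have "0 \<le> K * W0" using K W0 by simp
  then have "0 < c * H n - B" using cH by linarith
  then have a: "0 < a" using K by (simp add: a_def)
  have "{x\<in>space M. \<forall>n. (\<Sum>k<n. (c - K * indicator (A k) x) * w k) \<le> B}
      \<subseteq> {x\<in>space M. a \<le> Q n x}"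
  proof safe
    fix x assume "x \<in> space M" and "\<forall>n. (\<Sum>k<n. (c - K * indicator (A k) x) * w k) \<le> B"
    then have "c * H n - K * Q n x \<le> B" unfolding sum_eq by blast
    then have "c * H n - B \<le> K * Q n x" by linarith
    then show "a \<le> Q n x" using K by (simp add: a_def pos_divide_le_eq mult.commute)
  qed
  then have "prob {x\<in>space M. \<forall>n. (\<Sum>k<n. (c - K * indicator (A k) x) * w k) \<le> B}
      \<le> prob {x\<in>space M. a \<le> Q n x}"
    by (rule finite_measure_mono) measurable
  also have "\<dots> \<le> (W0 + q * H n) / a"
    unfolding Q_def H_def W0_def by (rule prob_weighted_indicator_sum_ge_le[OF A small w a])
  also have "\<dots> \<le> 1/2"
  proof -
    have "0 \<le> H n" using w by (simp add: H_def sum_nonneg)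
    then have "4 * K * q * H n \<le> c * H n" using Kq by (rule mult_right_mono[rotated])
    then have "2 * K * q * H n \<le> c * H n / 2" by simp
    then have "2 * K * (W0 + q * H n) \<le> c * H n - B" using cH by (simp add: algebra_simps)
    then show ?thesis using a K by (simp add: a_def field_simps)
  qed
  finally show ?thesis .
qed

lemma (in prob_space) not_AE_bdd_above_weighted_sums:
  fixes A :: "nat \<Rightarrow> 'a set" and w :: "nat \<Rightarrow> real"
  assumes A[measurable]: "\<And>k. A k \<in> events" and small: "\<And>k. L \<le> k \<Longrightarrow> prob (A k) \<le> q"
    and w: "\<And>k. 0 \<le> w k" and diverges: "filterlim (\<lambda>n. \<Sum>k<n. w k) at_top sequentially"
    and c: "0 < c" and K: "0 < K" and Kq: "4 * K * q \<le> c"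
  shows "\<not> (AE x in M. bdd_above (range (\<lambda>n. \<Sum>k<n. (c - K * indicator (A k) x) * w k)))"
proof
  define S where "S n x = (\<Sum>k<n. (c - K * indicator (A k) x) * w k)" for n x
  define BM where "BM m = {x\<in>space M. \<forall>n. S n x \<le> real m}" for m :: nat
  have [measurable]: "BM m \<in> events" for m unfolding BM_def S_def by measurable
  have "incseq BM"
    by (intro monoI) (auto simp: BM_def intro: order_trans of_nat_mono)
  then have "(\<lambda>m. prob (BM m)) \<longlonglongrightarrow> prob (\<Union>m. BM m)"
    by (intro finite_Lim_measure_incseq) auto
  moreover have "prob (BM m) \<le> 1/2" for m
    unfolding BM_def S_def by (rule prob_weighted_sums_bounded_le_half[OF assms])
  ultimately have half: "prob (\<Union>m. BM m) \<le> 1/2" by (intro LIMSEQ_le_const2) auto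
  assume "AE x in M. bdd_above (range (\<lambda>n. \<Sum>k<n. (c - K * indicator (A k) x) * w k))"
  from this AE_space have "AE x in M. x \<in> (\<Union>m. BM m)"
  proof eventually_elim
    case (elim x)
    then obtain B where "\<And>n. S n x \<le> B" by (auto simp: bdd_above_def S_def)
    then have "\<forall>n. S n x \<le> real (nat \<lceil>B\<rceil>)" by (meson of_nat_ceiling order.trans real_nat_ceiling_ge)
    with elim show ?case by (auto simp: BM_def)
  qed
  then have "prob (\<Union>m. BM m) = 1" by (subst AE_in_set_eq_1[symmetric]) auto
  with half show False by simp
qed

lemma (in prob_space) distr_stream_space_snth: "distr (stream_space M) M (\<lambda>\<omega>. \<omega> !! i) = M"
proof -
  have M: "prob_space M" by (rule prob_space_axioms)
  interpret product_prob_space "\<lambda>_. M" UNIV ..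
  have "distr (stream_space M) M (\<lambda>\<omega>. \<omega> !! i)
      = distr (distr (\<Pi>\<^sub>M i\<in>UNIV. M) (stream_space M) to_stream) M (\<lambda>\<omega>. \<omega> !! i)"
    by (subst stream_space_eq_distr) (rule refl)
  also have "\<dots> = distr (\<Pi>\<^sub>M i\<in>UNIV. M) M (\<lambda>X. X i)"
    by (subst distr_distr) (auto simp: comp_def to_stream_def)
  also have "\<dots> = M"
    by (rule distr_PiM_component) (auto intro: M)
  finally show ?thesis .
qed

lemma (in prob_space) measure_stream_space_snth:
  assumes "A \<in> events"
  shows "measure (stream_space M) {\<omega>\<in>space (stream_space M). \<omega> !! i \<in> A} = prob A"
  using measure_distr[of "\<lambda>\<omega>. \<omega> !! i" "stream_space M" M A] assms
  by (simp add: distr_stream_space_snth vimage_def Int_def conj_commute)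

lemma sets_stream_space_snth:
  assumes "A \<in> sets M"
  shows "{\<omega>\<in>space (stream_space M). \<omega> !! i \<in> A} \<in> sets (stream_space M)"
  using measurable_sets[OF measurable_snth assms, of i] by (simp add: vimage_def Int_def conj_commute)

lemma sets_hit_recently [measurable]:
  "{\<omega>. hit_recently L C ((!!) \<omega>) t} \<in> sets (stream_space (measure_pmf D))"
proof -
  have "{\<omega>. hit_recently L C ((!!) \<omega>) t}
      = (if t < L then space (stream_space (measure_pmf D))
         else (\<Union>i\<in>{t - L..<t}. {\<omega>\<in>space (stream_space (measure_pmf D)). \<omega> !! i \<in> {C}}))"
    by (auto simp: hit_recently_def space_stream_space)
  also have "\<dots> \<in> sets (stream_space (measure_pmf D))"
    by (auto intro!: sets_stream_space_snth)
  finally show ?thesis .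
qed

lemma prob_hit_recently_le:
  assumes "pmf D C \<le> p" "L \<le> t"
  shows "measure (stream_space (measure_pmf D)) {\<omega>. hit_recently L C ((!!) \<omega>) t} \<le> real L * p"
proof -
  let ?S = "stream_space (measure_pmf D)"
  have "measure ?S {\<omega>. hit_recently L C ((!!) \<omega>) t}
      = measure ?S (\<Union>i\<in>{t - L..<t}. {\<omega>\<in>space ?S. \<omega> !! i \<in> {C}})"
    using assms(2) by (intro arg_cong[where f = "measure ?S"])
      (auto simp: hit_recently_def space_stream_space)
  also have "\<dots> \<le> (\<Sum>i\<in>{t - L..<t}. measure ?S {\<omega>\<in>space ?S. \<omega> !! i \<in> {C}})"
    by (intro measure_UNION_le) (auto intro!: sets_stream_space_snth)
  also have "\<dots> = (\<Sum>i\<in>{t - L..<t}. pmf D C)"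
  proof (intro sum.cong refl)
    fix i
    show "measure ?S {\<omega>\<in>space ?S. \<omega> !! i \<in> {C}} = pmf D C"
      using measure_pmf.measure_stream_space_snth[where A = "{C}" and i = i]
      by (simp add: measure_pmf_single)
  qed
  also have "\<dots> \<le> real L * p" using assms by (simp add: mult_left_mono)
  finally show ?thesis .
qed

lemma sqrt_le_sum_inverse_sqrt: "sqrt (real n) \<le> (\<Sum>k<n. 1 / sqrt (real (Suc k)))"
proof -
  have "(\<Sum>k<n. 1 / sqrt (real n)) \<le> (\<Sum>k<n. 1 / sqrt (real (Suc k)))"
    by (intro sum_mono divide_left_mono) auto
  moreover have "(\<Sum>k<n. 1 / sqrt (real n)) = sqrt (real n)"
    by (cases "n = 0") (auto simp: field_simps)
  ultimately show ?thesis by simp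
qed

lemma filterlim_sum_inverse_sqrt:
  "filterlim (\<lambda>n. \<Sum>k<n. 1 / sqrt (real (Suc k))) at_top sequentially"
proof (rule filterlim_at_top_mono)
  show "filterlim (\<lambda>n. sqrt (real n)) at_top sequentially"
    by (rule filterlim_compose[OF sqrt_at_top filterlim_real_sequentially])
qed (intro always_eventually allI sqrt_le_sum_inverse_sqrt)

text \<open>With s = sqrt b2 the witnesses are p = 8 s^L and C = 1/(4 s^L) for L so large that
  L s^L is small: then the rare gradient C makes the expected gradient p C - (1 - p) = 1 + p
  positive, yet its influence on Adam's direction dies out within L steps.\<close>
lemma adam_counterexample_constants:
  assumes b1: "0 \<le> b1" and b2: "0 < b2" "b2 < 1" and b12: "b1 < sqrt b2" and K: "0 < K"
  obtains L :: nat and p C :: real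
  where "1 \<le> C" "0 < p" "p \<le> 1" "p * C = 2"
    and "b1 ^ L * C \<le> 1/4" "b1 ^ L \<le> 1/4" "b2 ^ L * C\<^sup>2 \<le> 1"
    and "4 * K * (real L * p) \<le> 1/3"
proof -
  define s where "s = sqrt b2"
  have s: "0 < s" "s < 1" using b2 by (auto simp: s_def)
  have "(\<lambda>n. real n * s ^ n) \<longlonglongrightarrow> 0" using s by (intro powser_times_n_limit_0) simp
  then have "\<forall>\<^sub>F n in sequentially. real n * s ^ n < min (1 / (96 * K)) (1/8)"
    using K by (intro order_tendstoD(2)) auto
  then obtain N where N: "\<And>n. N \<le> n \<Longrightarrow> real n * s ^ n < min (1 / (96 * K)) (1/8)"
    by (auto simp: eventually_sequentially)
  define L where "L = Suc N"
  have L: "1 \<le> L" "real L * s ^ L < min (1 / (96 * K)) (1/8)" using N[of L] by (auto simp: L_def)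
  have sL: "0 < s ^ L" using s by simp
  have "1 * s ^ L \<le> real L * s ^ L" using L sL by (intro mult_right_mono) auto
  then have sL8: "s ^ L \<le> 1/8" using L by linarith
  have b1L: "b1 ^ L \<le> s ^ L" using b1 b12 by (intro power_mono) (auto simp: s_def)
  define p where "p = 8 * s ^ L"
  define C where "C = 1 / (4 * s ^ L)"
  show ?thesis
  proof
    show "1 \<le> C" using sL sL8 by (simp add: C_def field_simps)
    show "0 < p" "p \<le> 1" using sL sL8 by (auto simp: p_def)
    show "p * C = 2" using s by (simp add: p_def C_def)
    have "b1 ^ L * C \<le> s ^ L * C" using sL by (intro mult_right_mono[OF b1L]) (simp add: C_def)
    also have "s ^ L * C = 1/4" using s by (simp add: C_def)
    finally show "b1 ^ L * C \<le> 1/4" .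
    show "b1 ^ L \<le> 1/4" using b1L sL8 by linarith
    have "b2 = s\<^sup>2" using b2 by (simp add: s_def)
    then have "b2 ^ L * C\<^sup>2 = (s ^ L * C)\<^sup>2"
      by (simp add: power_mult_distrib mult.commute flip: power_mult)
    then show "b2 ^ L * C\<^sup>2 \<le> 1" using sL by (simp add: C_def power2_eq_square)
    have "32 * K * (real L * s ^ L) \<le> 32 * K * (1 / (96 * K))"
      using L K by (intro mult_left_mono) auto
    then show "4 * K * (real L * p) \<le> 1/3" using K by (simp add: p_def field_simps)
  qed
qed

lemma adam_not_AE_convergent:
  assumes b1: "0 \<le> b1" "b1 < 1" and b2: "0 < b2" "b2 < 1" and b12: "b1 < sqrt b2"
    and C: "1 \<le> C" and D: "set_pmf D \<subseteq> {C, -1}" "pmf D C \<le> p"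
    and h: "b1 ^ L * C \<le> 1/4" "b1 ^ L \<le> 1/4" "b2 ^ L * C\<^sup>2 \<le> 1"
    and small: "4 * (adam_ratio_bound b1 b2 + 1/3) * (real L * p) \<le> 1/3"
    and \<alpha>: "0 < \<alpha>" and x1: "x1 \<in> {0..1}"
  shows "\<not> (AE \<omega> in stream_space (measure_pmf D).
           (\<lambda>t. adam_iter {0..1} x1 \<alpha> b1 b2 (\<lambda>t x. (\<omega> !! (t - 1)) * x) (Suc t)) \<longlonglongrightarrow> 0)"
proof
  define K where "K = adam_ratio_bound b1 b2 + 1/3"
  define A where "A k = {\<omega>. hit_recently L C ((!!) \<omega>) (Suc k)}" for k
  interpret S: prob_space "stream_space (measure_pmf D)"
    by (rule prob_space.prob_space_stream_space[OF measure_pmf.prob_space_axioms])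
  have K: "0 < K" using adam_ratio_bound_nonneg[of b1 b2] b1 b2 b12 by (simp add: K_def)
  have not_bounded: "\<not> (AE \<omega> in stream_space (measure_pmf D).
      bdd_above (range (\<lambda>n. \<Sum>k<n. (1/3 - K * indicator (A k) \<omega>) * (1 / sqrt (real (Suc k))))))"
  proof (rule S.not_AE_bdd_above_weighted_sums[OF _ _ _ filterlim_sum_inverse_sqrt])
    show "S.prob (A k) \<le> real L * p" if "L \<le> k" for k
      unfolding A_def using D(2) that by (intro prob_hit_recently_le) auto
    show "4 * K * (real L * p) \<le> 1/3" using small by (simp add: K_def)
  qed (use K in \<open>auto simp: A_def\<close>)
  have "AE \<omega> in stream_space (measure_pmf D). stream_all (\<lambda>x. x \<in> {C, -1}) \<omega>"
    using D(1) by (intro prob_space.AE_stream_all[OF measure_pmf.prob_space_axioms])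
      (auto simp: AE_measure_pmf_iff)
  moreover assume "AE \<omega> in stream_space (measure_pmf D).
      (\<lambda>t. adam_iter {0..1} x1 \<alpha> b1 b2 (\<lambda>t x. (\<omega> !! (t - 1)) * x) (Suc t)) \<longlonglongrightarrow> 0"
  ultimately have "AE \<omega> in stream_space (measure_pmf D).
      bdd_above (range (\<lambda>n. \<Sum>k<n. (1/3 - K * indicator (A k) \<omega>) * (1 / sqrt (real (Suc k)))))"
  proof eventually_elim
    case (elim \<omega>)
    then have "\<And>i. \<omega> !! i \<in> {C, -1}" by (auto simp: stream_all_def)
    from adam_convergent_imp_bdd_above[OF b1 b2 b12 C this h \<alpha> x1 elim(2)]
    show ?case by (simp add: A_def K_def indicator_def)
  qed
  with not_bounded show False by blast
qed

theorem theorem3: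
  fixes \<beta>1 \<beta>2 :: real
  assumes "0 \<le> \<beta>1" "\<beta>1 < 1" "0 \<le> \<beta>2" "\<beta>2 < 1" "\<beta>1 < sqrt \<beta>2"
  shows "\<exists>(F :: real set) (D :: real pmf) (x1 :: real) (xstar :: real).
           compact F \<and> convex F \<and> x1 \<in> F \<and>
           (\<exists>G. \<forall>c\<in>set_pmf D. \<bar>c\<bar> \<le> G) \<and>
           xstar \<in> F \<and>
           (\<forall>x\<in>F. x \<noteq> xstar \<longrightarrow>
              measure_pmf.expectation D (\<lambda>c. c * xstar) < measure_pmf.expectation D (\<lambda>c. c * x)) \<and>
           (\<forall>\<alpha>>0. \<not> (AE \<omega> in stream_space (measure_pmf D).
              (\<lambda>t. adam_iter F x1 \<alpha> \<beta>1 \<beta>2 (\<lambda>t x. (\<omega> !! (t - 1)) * x) (Suc t)) \<longlonglongrightarrow> xstar))"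
proof -
  have b2: "0 < \<beta>2" using assms by (metis le_less_trans not_less real_sqrt_le_0_iff)
  have K: "0 < adam_ratio_bound \<beta>1 \<beta>2 + 1/3"
    using adam_ratio_bound_nonneg[of \<beta>1 \<beta>2] assms b2 by simp
  obtain L p C where pC: "1 \<le> C" "0 < p" "p \<le> 1" "p * C = 2"
    and h: "\<beta>1 ^ L * C \<le> 1/4" "\<beta>1 ^ L \<le> 1/4" "\<beta>2 ^ L * C\<^sup>2 \<le> 1"
    and small: "4 * (adam_ratio_bound \<beta>1 \<beta>2 + 1/3) * (real L * p) \<le> 1/3"
    by (rule adam_counterexample_constants[OF assms(1) b2 assms(4,5) K])
  define D where "D = map_pmf (\<lambda>b. if b then C else -1) (bernoulli_pmf p)"
  have set_D: "set_pmf D \<subseteq> {C, -1}" by (auto simp: D_def)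
  have "(\<lambda>b. if b then C else -1) -` {C} = {True}" using pC by (auto split: if_splits)
  then have pmf_D: "pmf D C \<le> p"
    using pC by (simp add: D_def pmf_map measure_pmf_single)
  have expectation_D: "measure_pmf.expectation D (\<lambda>c. c) = 1 + p"
    using pC by (simp add: D_def algebra_simps)
  show ?thesis
  proof (intro exI conjI)
    show "\<forall>c\<in>set_pmf D. \<bar>c\<bar> \<le> C" using set_D pC by auto
    show "\<forall>x\<in>{0..1}. x \<noteq> 0 \<longrightarrow>
        measure_pmf.expectation D (\<lambda>c. c * 0) < measure_pmf.expectation D (\<lambda>c. c * x)"
      using pC by (auto simp: expectation_D intro!: mult_pos_pos)
    show "\<forall>\<alpha>>0. \<not> (AE \<omega> in stream_space (measure_pmf D).
        (\<lambda>t. adam_iter {0..1} 0 \<alpha> \<beta>1 \<beta>2 (\<lambda>t x. (\<omega> !! (t - 1)) * x) (Suc t)) \<longlonglongrightarrow> 0)"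
      using adam_not_AE_convergent[OF assms(1,2) b2 assms(4,5) pC(1) set_D pmf_D h small] by simp
  qed auto
qed

end
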